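(* Let $\delta\ge2$ be an integer, $n=4\delta+2$, and $q$ a prime power with $n\mid(q-1)$. Let $b$ be a positive integer with $\gcd(b,n)=1$ and $t\in\{0,\dots,n-1\}$. Put $$A=\{\alpha^{t},\alpha^{t+b},\alpha^{t+(\delta+1)b},\alpha^{t+(2\delta+1)b}\},\qquad B=\{1,\alpha^{b},\dots,\alpha^{(\delta-2)b}\}.$$ Then $C_{AB}$ is an optimal cyclic $(\delta+2,\delta)$-LRC over $\mathbb{F}_q$ with parameters $[4\delta+2,\ \delta+4,\ 2\delta]$.
   Context: Let $q$ be a prime power and $n\mid(q-1)$, so the set $R_n$ of all $n$-th roots of unity lies in $\mathbb{F}_q$; let $\alpha\in\mathbb{F}_q$ be a primitive $n$-th root of unity. For $A,B\subseteq R_n$, $AB=\{\beta\gamma:\beta\in A,\gamma\in B\}$, and for $Z\subseteq R_n$, $C_Z$ denotes the cyclic code of length $n$ over $\mathbb{F}_q$ with complete defining set $Z$, i.e. the ideal generated by $\prod_{\beta\in Z}(x-\beta)$ in $\mathbb{F}_q[x]/(x^n-1)$, identified with a subspace of $\mathbb{F}_q^n$; it has dimension $n-|Z|$. Locality: for a linear code $C\subseteq\mathbb{F}_q^n$ and integers $r\ge1$, $\delta\ge2$, the $i$-th coordinate has $(r,\delta)$-locality if there is $S_i\subseteq\{1,\dots,n\}$ with $i\in S_i$, $|S_i|\le r+\delta-1$ such that the punctured code $C|_{S_i}$ has minimum distance at least $\delta$; $C$ is an $(r,\delta)$-LRC if every coordinate has $(r,\delta)$-locality. An $[n,k,d]$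 $(r,\delta)$-LRC is optimal if $d=n-k-(\lceil k/r\rceil-1)(\delta-1)+1$ (this quantity is always an upper bound on $d$). *)

theory Defs
  imports Main "HOL-Computational_Algebra.Polynomial" "HOL-Library.Function_Algebras"
begin

(* Vectors of F_q^n are represented as functions nat => 'a; coordinates are 0..n-1,
   and codewords vanish at all indices >= n. *)

definition set_mult :: "'a::times set \<Rightarrow> 'a set \<Rightarrow> 'a set" where
  "set_mult A B = {x * y | x y. x \<in> A \<and> y \<in> B}"

definition prim_root :: "nat \<Rightarrow> 'a::field \<Rightarrow> bool" where
  "prim_root n a \<longleftrightarrow> a ^ n = 1 \<and> (\<forall>k. 0 < k \<and> k < n \<longrightarrow> a ^ k \<noteq> 1)"

definition gen_poly :: "'a::field set \<Rightarrow> 'a poly" where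
  "gen_poly Z = (\<Prod>\<beta>\<in>Z. [:-\<beta>, 1:])"

(* cyclic code of length n with complete defining set Z: the ideal generated by gen_poly Z
   in F[x]/(x^n - 1), each residue identified with its coefficient vector (degree < n) *)
definition cyclic_code :: "nat \<Rightarrow> 'a::field set \<Rightarrow> (nat \<Rightarrow> 'a) set" where
  "cyclic_code n Z =
     {c. \<exists>h. c = (\<lambda>i. coeff ((h * gen_poly Z) mod (monom 1 n - 1)) i)}"

definition hamming_wt :: "nat \<Rightarrow> (nat \<Rightarrow> 'a::zero) \<Rightarrow> nat" where
  "hamming_wt n c = card {i. i < n \<and> c i \<noteq> 0}"

definition min_dist :: "nat \<Rightarrow> (nat \<Rightarrow> 'a::zero) set \<Rightarrow> nat" where
  "min_dist n C = Min {hamming_wt n c | c. c \<in> C \<and> (\<exists>i<n. c i \<noteq> 0)}"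

definition code_dim :: "(nat \<Rightarrow> 'a::field) set \<Rightarrow> nat" where
  "code_dim C = vector_space.dim (\<lambda>a v. (\<lambda>i. a * v i)) C"

(* the punctured code C|_S has minimum distance at least delta:
   every nonzero codeword of C|_S has weight (on S) at least delta *)
definition punct_dist_ge :: "(nat \<Rightarrow> 'a::zero) set \<Rightarrow> nat set \<Rightarrow> nat \<Rightarrow> bool" where
  "punct_dist_ge C S \<delta> \<longleftrightarrow>
     (\<forall>c\<in>C. (\<exists>i\<in>S. c i \<noteq> 0) \<longrightarrow> \<delta> \<le> card {i\<in>S. c i \<noteq> 0})"

definition has_locality :: "nat \<Rightarrow> (nat \<Rightarrow> 'a::zero) set \<Rightarrow> nat \<Rightarrow> nat \<Rightarrow> nat \<Rightarrow> bool" where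
  "has_locality n C r \<delta> i \<longleftrightarrow>
     (\<exists>S. S \<subseteq> {0..<n} \<and> i \<in> S \<and> card S \<le> r + \<delta> - 1 \<and> punct_dist_ge C S \<delta>)"

definition is_LRC :: "nat \<Rightarrow> (nat \<Rightarrow> 'a::zero) set \<Rightarrow> nat \<Rightarrow> nat \<Rightarrow> bool" where
  "is_LRC n C r \<delta> \<longleftrightarrow> 1 \<le> r \<and> 2 \<le> \<delta> \<and> (\<forall>i<n. has_locality n C r \<delta> i)"

definition optimal_LRC :: "nat \<Rightarrow> (nat \<Rightarrow> 'a::field) set \<Rightarrow> nat \<Rightarrow> nat \<Rightarrow> bool" where
  "optimal_LRC n C r \<delta> \<longleftrightarrow> is_LRC n C r \<delta> \<and>
     int (min_dist n C) = int n - int (code_dim C)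
        - (\<lceil>real (code_dim C) / real r\<rceil> - 1) * (int \<delta> - 1) + 1"

end

theory Submission
  imports Defs
begin

text \<open>
  Write \<open>n = 2m\<close> with \<open>m = 2\<delta> + 1\<close> and split a codeword \<open>c(x) = E(x\<^sup>2) + x O(x\<^sup>2)\<close> into
  its even and odd parts.  With \<open>\<beta> = \<alpha>\<^sup>b\<close>, again a primitive \<open>n\<close>-th root of unity, the defining
  set consists of the \<open>\<alpha>\<^sup>t \<beta>\<^sup>e\<close> with \<open>e \<in> [0,\<delta>) \<union> [\<delta>+1,2\<delta>) \<union> [2\<delta>+1,3\<delta>)\<close>.  Since \<open>\<beta>\<^sup>m = -1\<close>, it
  contains both \<open>\<plusminus>\<alpha>\<^sup>t \<beta>\<^sup>j\<close> for \<open>j \<le> \<delta> - 2\<close>, so \<open>E\<close> and \<open>O\<close> both vanish at \<open>\<alpha>\<^sup>2\<^sup>t \<gamma>\<^sup>j\<close>, \<open>j \<le> \<delta> - 2\<close>,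
  where \<open>\<gamma> = \<beta>\<^sup>2\<close> is a primitive \<open>m\<close>-th root of unity.  By the BCH bound each nonzero part
  has weight at least \<open>\<delta>\<close>; this is the \<open>(\<delta>+2, \<delta>)\<close>-locality, with the two parity classes
  of size \<open>2\<delta> + 1\<close> as repair groups, and it gives weight \<open>2\<delta>\<close> when both parts are nonzero.
  If one part is zero, the other vanishes at \<open>\<alpha>\<^sup>2\<^sup>t \<gamma>\<^sup>j\<close> for every \<open>j < m\<close> except \<open>\<delta>\<close> and \<open>2\<delta>\<close>; read
  as powers of the primitive root \<open>\<gamma>\<^sup>\<delta>\<close> these contain \<open>2\<delta> - 1\<close> consecutive ones, so its weight
  is at least \<open>2\<delta>\<close> too.  The even polynomial \<open>\<Prod>(x\<^sup>2 - \<alpha>\<^sup>2\<^sup>t \<gamma>\<^sup>j)\<close> over \<open>j \<in> [0,\<delta>) \<union> [\<delta>+1,2\<delta>)\<close> is a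
  codeword of degree \<open>4\<delta> - 2\<close>, hence of weight at most \<open>2\<delta>\<close>.  Finally the dimension is
  \<open>n - (3\<delta> - 2) = \<delta> + 4\<close>, and as \<open>\<lceil>(\<delta>+4)/(\<delta>+2)\<rceil> = 2\<close> the Singleton-like bound equals \<open>2\<delta>\<close>.
\<close>

section \<open>Coefficient vectors\<close>

lemma sum_fun_apply: "(\<Sum>v\<in>T. f v) i = (\<Sum>v\<in>T. f v i)"
  for f :: "'b \<Rightarrow> nat \<Rightarrow> 'a::comm_monoid_add"
  by (induction T rule: infinite_finite_induct) auto

lemma sum_even_odd: "(\<Sum>i<2*m. f i) = (\<Sum>i<m. f (2*i)) + (\<Sum>i<m. f (2*i+1))"
  for f :: "nat \<Rightarrow> 'a::comm_monoid_add"
  by (induction m) (simp_all add: algebra_simps)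

lemma card_even_below: "card {x. x < 2*m \<and> even x \<and> P x} = card {i. i < m \<and> P (2*i)}"
  for m :: nat
proof -
  have "{x. x < 2*m \<and> even x \<and> P x} = (\<lambda>i. 2*i) ` {i. i < m \<and> P (2*i)}"
    by (auto elim!: evenE)
  then show ?thesis by (simp add: card_image inj_on_def)
qed

lemma card_odd_below: "card {x. x < 2*m \<and> odd x \<and> P x} = card {i. i < m \<and> P (2*i+1)}"
  for m :: nat
proof -
  have "{x. x < 2*m \<and> odd x \<and> P x} = (\<lambda>i. 2*i+1) ` {i. i < m \<and> P (2*i+1)}"
    by (auto elim!: oddE)
  then show ?thesis by (simp add: card_image inj_on_def)
qed

definition even_part :: "(nat \<Rightarrow> 'a) \<Rightarrow> nat \<Rightarrow> 'a" where
  "even_part c i = c (2*i)"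

definition odd_part :: "(nat \<Rightarrow> 'a) \<Rightarrow> nat \<Rightarrow> 'a" where
  "odd_part c i = c (2*i+1)"

lemma hamming_wt_even_odd:
  "hamming_wt (2*m) c = hamming_wt m (even_part c) + hamming_wt m (odd_part c)"
proof -
  have "{x. x < 2*m \<and> c x \<noteq> 0} = {x. x < 2*m \<and> even x \<and> c x \<noteq> 0} \<union> {x. x < 2*m \<and> odd x \<and> c x \<noteq> 0}"
    by auto
  then have "hamming_wt (2*m) c = card {x. x < 2*m \<and> even x \<and> c x \<noteq> 0} + card {x. x < 2*m \<and> odd x \<and> c x \<noteq> 0}"
    unfolding hamming_wt_def by (simp add: card_Un_disjoint disjoint_iff)
  then show ?thesis
    unfolding hamming_wt_def card_even_below card_odd_below even_part_def odd_part_def .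
qed

lemma hamming_wt_eq_0_iff: "hamming_wt m c = 0 \<longleftrightarrow> (\<forall>i<m. c i = 0)"
  by (auto simp: hamming_wt_def)

lemma card_parity_class_support:
  "card {x \<in> {x. x < 2*m \<and> (even x \<longleftrightarrow> even i)}. c x \<noteq> 0}
     = hamming_wt m (if even i then even_part c else odd_part c)"
proof (cases "even i")
  case True
  then have "{x \<in> {x. x < 2*m \<and> (even x \<longleftrightarrow> even i)}. c x \<noteq> 0} = {x. x < 2*m \<and> even x \<and> c x \<noteq> 0}"
    by auto
  then show ?thesis
    using True by (simp add: card_even_below hamming_wt_def even_part_def)
next
  case False
  then have "{x \<in> {x. x < 2*m \<and> (even x \<longleftrightarrow> even i)}. c x \<noteq> 0} = {x. x < 2*m \<and> odd x \<and> c x \<noteq> 0}"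
    by auto
  then show ?thesis
    using False by (simp add: card_odd_below hamming_wt_def odd_part_def)
qed

lemma hamming_wt_le_if_zero_from: "(\<And>i. k \<le> i \<Longrightarrow> c i = 0) \<Longrightarrow> hamming_wt m c \<le> k"
  unfolding hamming_wt_def by (rule order_trans[OF card_mono[of "{..<k}"]]) (auto simp: not_le[symmetric])

lemma hamming_wt_le: "hamming_wt n c \<le> n"
  unfolding hamming_wt_def by (rule order_trans[OF card_mono[of "{..<n}"]]) auto

lemma min_dist_eqI:
  assumes lower: "\<And>c. c \<in> C \<Longrightarrow> \<exists>i<n. c i \<noteq> 0 \<Longrightarrow> d \<le> hamming_wt n c"
    and "c \<in> C" and "\<exists>i<n. c i \<noteq> 0" and "hamming_wt n c = d"
  shows "min_dist n C = d"
  unfolding min_dist_def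
proof (rule Min_eqI)
  show "finite {hamming_wt n c | c. c \<in> C \<and> (\<exists>i<n. c i \<noteq> 0)}"
    by (rule finite_subset[of _ "{..n}"]) (auto simp: hamming_wt_le)
  fix w assume "w \<in> {hamming_wt n c | c. c \<in> C \<and> (\<exists>i<n. c i \<noteq> 0)}"
  then obtain c where "w = hamming_wt n c" and "c \<in> C" and "\<exists>i<n. c i \<noteq> 0"
    by blast
  then show "d \<le> w" by (simp add: lower)
next
  show "d \<in> {hamming_wt n c | c. c \<in> C \<and> (\<exists>i<n. c i \<noteq> 0)}"
    using assms(2-4) by blast
qed

definition poly_vec :: "nat \<Rightarrow> (nat \<Rightarrow> 'a::comm_semiring_1) \<Rightarrow> 'a \<Rightarrow> 'a" where
  "poly_vec m c x = (\<Sum>i<m. c i * x ^ i)"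

lemma poly_eq_poly_vec: "degree p < m \<Longrightarrow> poly p x = poly_vec m (coeff p) x"
  unfolding poly_vec_def poly_altdef
  by (rule sum.mono_neutral_left) (auto simp: coeff_eq_0)

lemma poly_vec_even_odd:
  "poly_vec (2*m) c x = poly_vec m (even_part c) (x^2) + x * poly_vec m (odd_part c) (x^2)"
proof -
  have "x ^ (2*i) = (x^2) ^ i" and "x ^ (2*i+1) = x * (x^2) ^ i" for i
    by (simp_all add: power_mult)
  then show ?thesis
    unfolding poly_vec_def sum_even_odd even_part_def odd_part_def
    by (simp add: sum_distrib_left mult_ac)
qed

section \<open>Primitive roots of unity\<close>

lemma power_mod_order:
  fixes a :: "'a::monoid_mult"
  assumes "a ^ n = 1"
  shows "a ^ k = a ^ (k mod n)"
proof -
  have "a ^ k = a ^ (n * (k div n) + k mod n)"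
    by simp
  also have "\<dots> = (a ^ n) ^ (k div n) * a ^ (k mod n)"
    by (simp only: power_add power_mult)
  finally show ?thesis
    using assms by simp
qed

lemma prim_root_nonzero: "prim_root n a \<Longrightarrow> 0 < n \<Longrightarrow> a \<noteq> 0"
  by (cases n) (auto simp: prim_root_def)

lemma prim_root_power_eq_1_iff:
  assumes "prim_root n a" and "0 < n"
  shows "a ^ k = 1 \<longleftrightarrow> n dvd k"
proof -
  have "a ^ n = 1" and "\<And>j. 0 < j \<Longrightarrow> j < n \<Longrightarrow> a ^ j \<noteq> 1"
    using assms(1) by (auto simp: prim_root_def)
  then show ?thesis
    using power_mod_order[of a n k] assms(2)
    by (metis dvd_eq_mod_eq_0 gr0I mod_less_divisor power_0)
qed

lemma prim_root_inj_on_powers: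
  assumes "prim_root n a"
  shows "inj_on (\<lambda>i. a ^ i) {..<n}"
proof (rule linorder_inj_onI')
  fix i j assume "i \<in> {..<n}" and "j \<in> {..<n}" and "i < j"
  then have "0 < n" by simp
  show "a ^ i \<noteq> a ^ j"
  proof
    assume eq: "a ^ i = a ^ j"
    have "a ^ i * a ^ (j - i) = a ^ j"
      using \<open>i < j\<close> by (simp flip: power_add)
    then have "a ^ i * a ^ (j - i) = a ^ i * 1"
      using eq by simp
    then have "a ^ (j - i) = 1"
      using prim_root_nonzero[OF assms \<open>0 < n\<close>] by simp
    then have "n dvd j - i"
      using prim_root_power_eq_1_iff[OF assms \<open>0 < n\<close>] by blast
    then have "n \<le> j - i"
      using \<open>i < j\<close> by (intro dvd_imp_le) simp_all
    then show False
      using \<open>j \<in> {..<n}\<close> by simp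
  qed
qed

lemma prim_root_power_coprime:
  assumes root: "prim_root n a" and "0 < n" and "coprime k n"
  shows "prim_root n (a ^ k)"
  unfolding prim_root_def
proof (intro conjI allI impI)
  have "a ^ n = 1"
    using root by (simp add: prim_root_def)
  then show "(a ^ k) ^ n = 1"
    by (metis power_mult mult.commute power_one)
  fix j assume j: "0 < j \<and> j < n"
  have "\<not> n dvd k * j"
    using j \<open>coprime k n\<close> by (auto simp: coprime_commute coprime_dvd_mult_right_iff dest: dvd_imp_le)
  then show "(a ^ k) ^ j \<noteq> 1"
    by (simp add: prim_root_power_eq_1_iff[OF root \<open>0 < n\<close>] flip: power_mult)
qed

lemma prim_root_square:
  assumes "prim_root (2*m) a"
  shows "prim_root m (a ^ 2)"
  unfolding prim_root_def
proof (intro conjI allI impI)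
  show "(a ^ 2) ^ m = 1"
    using assms by (simp add: prim_root_def flip: power_mult)
  fix j assume "0 < j \<and> j < m"
  then show "(a ^ 2) ^ j \<noteq> 1"
    using assms by (simp add: prim_root_def flip: power_mult)
qed

lemma prim_root_half_power:
  fixes a :: "'a::field"
  assumes "prim_root (2*m) a" and "0 < m"
  shows "a ^ m = -1"
proof -
  have "a ^ m * a ^ m = 1"
    using assms(1) by (simp add: prim_root_def mult_2 flip: power_add)
  then have "(a ^ m - 1) * (a ^ m + 1) = 0"
    by (simp add: algebra_simps)
  moreover have "a ^ m \<noteq> 1"
    using assms by (simp add: prim_root_def)
  ultimately show ?thesis by (simp add: eq_neg_iff_add_eq_0)
qed

lemma coprime_double_succ: "coprime (2*d+1) (d::nat)"
  by (metis coprime_add_one_left coprime_commute coprime_mult_left_iff)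

lemma mod_double_succ_avoids:
  fixes d k :: nat
  assumes "k + 2 \<le> 2*d"
  shows "d * (k + 3) mod (2*d+1) \<noteq> d" and "d * (k + 3) mod (2*d+1) \<noteq> 2*d"
proof -
  have no_multiple: "\<not> (2*d+1) dvd d * j" if "0 < j" and "j < 2*d+1" for j
    using that coprime_double_succ[of d] by (auto simp: coprime_dvd_mult_right_iff dest: dvd_imp_le)
  show "d * (k + 3) mod (2*d+1) \<noteq> d"
  proof
    assume "d * (k + 3) mod (2*d+1) = d"
    then have "d * (k + 3) mod (2*d+1) = d mod (2*d+1)" by simp
    then have "(2*d+1) dvd d * (k + 3) - d"
      by (subst (asm) mod_eq_dvd_iff_nat) simp_all
    moreover have "d * (k + 3) - d = d * (k + 2)"
      by (simp add: algebra_simps)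
    ultimately show False
      using no_multiple[of "k + 2"] assms by simp
  qed
  show "d * (k + 3) mod (2*d+1) \<noteq> 2*d"
  proof
    assume "d * (k + 3) mod (2*d+1) = 2*d"
    then have "d * (k + 3) mod (2*d+1) = (2*d) mod (2*d+1)" by simp
    then have "(2*d+1) dvd d * (k + 3) - 2*d"
      by (subst (asm) mod_eq_dvd_iff_nat) simp_all
    moreover have "d * (k + 3) - 2*d = d * (k + 1)"
      by (simp add: algebra_simps)
    ultimately show False
      using no_multiple[of "k + 1"] assms by simp
  qed
qed

section \<open>The BCH bound\<close>

lemma vandermonde_kernel:
  fixes x u :: "'b \<Rightarrow> 'a::field"
  assumes "finite S" and "inj_on x S" and "i0 \<in> S"
    and power_sums: "\<And>k. k < card S \<Longrightarrow> (\<Sum>i\<in>S. u i * x i ^ k) = 0"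
  shows "u i0 = 0"
proof -
  define P where "P = (\<Prod>i\<in>S-{i0}. [:- x i, 1:])"
  have "degree P \<le> card (S - {i0})"
    unfolding P_def by (rule order_trans[OF degree_prod_sum_le]) (use \<open>finite S\<close> in auto)
  moreover have "0 < card S"
    using \<open>finite S\<close> \<open>i0 \<in> S\<close> by (auto simp: card_gt_0_iff)
  ultimately have "degree P < card S"
    using \<open>finite S\<close> \<open>i0 \<in> S\<close> by simp
  have "(\<Sum>i\<in>S. u i * poly P (x i)) = (\<Sum>k\<le>degree P. coeff P k * (\<Sum>i\<in>S. u i * x i ^ k))"
    by (simp add: poly_altdef sum_distrib_left mult_ac sum.swap[of _ S])
  also have "\<dots> = 0"
    using \<open>degree P < card S\<close> by (intro sum.neutral) (simp add: power_sums)
  also have "(\<Sum>i\<in>S. u i * poly P (x i)) = u i0 * poly P (x i0)"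
  proof -
    have "poly P (x i) = 0" if "i \<in> S - {i0}" for i
      using that \<open>finite S\<close> by (auto simp: P_def poly_prod)
    then show ?thesis
      using \<open>finite S\<close> \<open>i0 \<in> S\<close> by (simp add: sum.remove)
  qed
  finally have "u i0 * poly P (x i0) = 0" .
  moreover have "poly P (x i0) \<noteq> 0"
    using \<open>finite S\<close> \<open>inj_on x S\<close> \<open>i0 \<in> S\<close>
    by (auto simp: P_def poly_prod dest: inj_onD)
  ultimately show ?thesis by simp
qed

lemma bch_bound:
  fixes c :: "nat \<Rightarrow> 'a::field"
  assumes root: "prim_root m \<omega>" and "a \<noteq> 0" and nonzero: "\<exists>i<m. c i \<noteq> 0"
    and zeros: "\<And>k. k < L \<Longrightarrow> poly_vec m c (a * \<omega> ^ (s + k)) = 0"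
  shows "L < hamming_wt m c"
proof (rule ccontr)
  define S where "S = {i. i < m \<and> c i \<noteq> 0}"
  assume "\<not> L < hamming_wt m c"
  then have "card S \<le> L"
    by (simp add: hamming_wt_def S_def)
  obtain i0 where "i0 \<in> S"
    using nonzero by (auto simp: S_def)
  then have "0 < m" by (simp add: S_def)
  have "c i0 * a ^ i0 * \<omega> ^ (s * i0) = 0"
  proof (rule vandermonde_kernel[where x = "\<lambda>i. \<omega> ^ i" and u = "\<lambda>i. c i * a ^ i * \<omega> ^ (s * i)"])
    show "finite S" by (simp add: S_def)
    show "inj_on (\<lambda>i. \<omega> ^ i) S"
      using prim_root_inj_on_powers[OF root] by (rule inj_on_subset) (auto simp: S_def)
    show "i0 \<in> S" by fact
    fix k assume "k < card S"
    have "(a * \<omega> ^ (s + k)) ^ i = a ^ i * \<omega> ^ (s * i) * (\<omega> ^ i) ^ k" for i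
      by (simp add: power_add power_mult_distrib mult.commute flip: power_mult)
    then have "(\<Sum>i\<in>S. c i * a ^ i * \<omega> ^ (s * i) * (\<omega> ^ i) ^ k) = (\<Sum>i\<in>S. c i * (a * \<omega> ^ (s + k)) ^ i)"
      by (simp add: mult.assoc)
    also have "\<dots> = poly_vec m c (a * \<omega> ^ (s + k))"
      unfolding poly_vec_def by (rule sum.mono_neutral_left) (auto simp: S_def)
    also have "\<dots> = 0"
      using \<open>k < card S\<close> \<open>card S \<le> L\<close> by (intro zeros) simp
    finally show "(\<Sum>i\<in>S. c i * a ^ i * \<omega> ^ (s * i) * (\<omega> ^ i) ^ k) = 0" .
  qed
  then show False
    using \<open>i0 \<in> S\<close> \<open>a \<noteq> 0\<close> prim_root_nonzero[OF root \<open>0 < m\<close>] by (simp add: S_def)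
qed

section \<open>Cyclic codes\<close>

lemma gen_poly_root: "finite Z \<Longrightarrow> z \<in> Z \<Longrightarrow> poly (gen_poly Z) z = 0"
  by (auto simp: gen_poly_def poly_prod)

lemma degree_gen_poly: "finite Z \<Longrightarrow> degree (gen_poly Z) = card Z"
  unfolding gen_poly_def by (subst degree_prod_eq_sum_degree) auto

lemma gen_poly_nonzero: "gen_poly Z \<noteq> 0"
  by (cases "finite Z") (auto simp: gen_poly_def)

lemma gen_poly_dvd:
  fixes p :: "'a::field poly"
  assumes "finite Z" and "\<forall>z\<in>Z. poly p z = 0"
  shows "gen_poly Z dvd p"
  using assms
proof (induction Z arbitrary: p rule: finite_induct)
  case empty
  then show ?case by (simp add: gen_poly_def)
next
  case (insert z Z)
  obtain r where p: "p = [:-z, 1:] * r"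
    using insert.prems by (auto simp: poly_eq_0_iff_dvd)
  have "\<forall>w\<in>Z. poly r w = 0"
    using insert.prems insert.hyps(2) by (auto simp: p)
  then have "gen_poly Z dvd r"
    by (rule insert.IH)
  moreover have "gen_poly (insert z Z) = [:-z, 1:] * gen_poly Z"
    using insert.hyps by (simp add: gen_poly_def)
  ultimately show ?case
    unfolding p by (metis mult_dvd_mono dvd_refl)
qed

lemma degree_monom_minus_one:
  assumes "0 < n"
  shows "degree (monom (1::'a::field) n - 1) = n"
proof -
  have "degree (monom (1::'a) n + - 1) = degree (monom (1::'a) n)"
    using assms by (intro degree_add_eq_left) (simp add: degree_monom_eq)
  then show ?thesis
    by (simp add: degree_monom_eq)
qed

lemma cyclic_code_eq:
  fixes Z :: "'a::field set"
  assumes "finite Z" and roots: "\<forall>z\<in>Z. z ^ n = 1" and "0 < n"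
  shows "cyclic_code n Z = {coeff p | p. degree p < n \<and> (\<forall>z\<in>Z. poly p z = 0)}"
proof (intro set_eqI iffI)
  fix c assume "c \<in> cyclic_code n Z"
  then obtain h where c: "c = coeff ((h * gen_poly Z) mod (monom 1 n - 1))"
    unfolding cyclic_code_def by auto
  define M :: "'a poly" where "M = monom 1 n - 1"
  define r where "r = (h * gen_poly Z) mod M"
  have "degree M = n"
    unfolding M_def using \<open>0 < n\<close> by (rule degree_monom_minus_one)
  then have "M \<noteq> 0"
    using \<open>0 < n\<close> by auto
  have "degree r < n"
  proof (cases "r = 0")
    case False
    then show ?thesis
      using degree_mod_less[OF \<open>M \<noteq> 0\<close>, of "h * gen_poly Z"] \<open>degree M = n\<close> by (simp add: r_def)
  qed (use \<open>0 < n\<close> in simp)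
  have "poly r z = 0" if "z \<in> Z" for z
  proof -
    have "poly M z = 0"
      using roots that by (simp add: M_def poly_monom)
    moreover have "h * gen_poly Z = (h * gen_poly Z) div M * M + r"
      by (simp add: r_def)
    then have "poly (h * gen_poly Z) z = poly ((h * gen_poly Z) div M) z * poly M z + poly r z"
      by (metis poly_add poly_mult)
    ultimately show ?thesis
      using gen_poly_root[OF \<open>finite Z\<close> that] by simp
  qed
  then show "c \<in> {coeff p | p. degree p < n \<and> (\<forall>z\<in>Z. poly p z = 0)}"
    using c \<open>degree r < n\<close> by (auto simp: r_def M_def)
next
  fix c assume "c \<in> {coeff p | p. degree p < n \<and> (\<forall>z\<in>Z. poly p z = 0)}"
  then obtain p where c: "c = coeff p" and "degree p < n" and "\<forall>z\<in>Z. poly p z = 0"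
    by blast
  then obtain h where "p = h * gen_poly Z"
    using gen_poly_dvd[OF \<open>finite Z\<close>] by (metis dvdE mult.commute)
  moreover have "p mod (monom 1 n - 1) = p"
    using \<open>degree p < n\<close> \<open>0 < n\<close> by (simp add: mod_poly_less degree_monom_minus_one)
  ultimately show "c \<in> cyclic_code n Z"
    unfolding cyclic_code_def c by (metis (mono_tags, lifting) mem_Collect_eq)
qed

interpretation vec: vector_space "(\<lambda>a v i. a * v i) :: 'a::field \<Rightarrow> (nat \<Rightarrow> 'a) \<Rightarrow> nat \<Rightarrow> 'a"
  by unfold_locales (auto simp: algebra_simps fun_eq_iff)

lemma coeff_sum_monom_mult:
  "coeff ((\<Sum>i\<in>I. monom (f i) i) * g) j = (\<Sum>i\<in>I. f i * coeff (monom 1 i * g) j)"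
  for g :: "'a::comm_semiring_1 poly"
  by (auto simp: sum_distrib_right coeff_sum coeff_monom_mult intro!: sum.cong)

lemma inj_coeff_monom_mult:
  fixes g :: "'a::field poly"
  assumes "g \<noteq> 0"
  shows "inj (\<lambda>i. coeff (monom 1 i * g))"
proof (rule injI)
  fix i j assume "coeff (monom 1 i * g) = coeff (monom 1 j * g)"
  then have "degree (monom 1 i * g) = degree (monom 1 j * g)"
    by (metis coeff_inject)
  then show "i = j"
    using assms by (simp add: degree_mult_eq degree_monom_eq)
qed

lemma independent_coeff_monom_mult:
  fixes g :: "'a::field poly"
  assumes "g \<noteq> 0"
  shows "vec.independent ((\<lambda>i. coeff (monom 1 i * g)) ` {..<k})"
proof (rule vec.independent_if_scalars_zero)
  define E where "E i = coeff (monom 1 i * g)" for i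
  have "inj E"
    unfolding E_def using assms by (rule inj_coeff_monom_mult)
  fix f v
  assume sum0: "(\<Sum>x\<in>E ` {..<k}. (\<lambda>i. f x * x i)) = 0" and "v \<in> E ` {..<k}"
  define Q where "Q = (\<Sum>i<k. monom (f (E i)) i)"
  have "coeff (Q * g) j = 0" for j
  proof -
    have "coeff (Q * g) j = (\<Sum>x\<in>E ` {..<k}. (\<lambda>i. f x * x i)) j"
      unfolding Q_def coeff_sum_monom_mult sum_fun_apply E_def[symmetric]
      by (simp add: sum.reindex inj_on_subset[OF \<open>inj E\<close>])
    then show ?thesis
      using sum0 by simp
  qed
  then have "Q * g = 0"
    by (simp add: poly_eq_iff)
  then have "Q = 0"
    using \<open>g \<noteq> 0\<close> by simp
  moreover obtain i where "i < k" and "v = E i"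
    using \<open>v \<in> E ` {..<k}\<close> by auto
  moreover have "coeff Q i = f (E i)"
    using \<open>i < k\<close> by (simp add: Q_def coeff_sum)
  ultimately show "f v = 0"
    by simp
qed simp

lemma coeff_mult_in_span:
  fixes g h :: "'a::field poly"
  assumes "\<And>i. k \<le> i \<Longrightarrow> coeff h i = 0"
  shows "coeff (h * g) \<in> vec.span ((\<lambda>i. coeff (monom 1 i * g)) ` {..<k})"
proof -
  define H where "H = (\<Sum>i<k. monom (coeff h i) i)"
  have "h = H"
    using assms by (auto simp: H_def poly_eq_iff coeff_sum not_less)
  have "coeff (h * g) j = (\<Sum>i<k. (\<lambda>j. coeff h i * coeff (monom 1 i * g) j)) j" for j
  proof -
    have "coeff (h * g) j = coeff (H * g) j"
      using \<open>h = H\<close> by simp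
    also have "\<dots> = (\<Sum>i<k. (\<lambda>j. coeff h i * coeff (monom 1 i * g) j)) j"
      unfolding H_def coeff_sum_monom_mult sum_fun_apply ..
    finally show ?thesis .
  qed
  then have "coeff (h * g) = (\<Sum>i<k. (\<lambda>j. coeff h i * coeff (monom 1 i * g) j))" ..
  also have "\<dots> \<in> vec.span ((\<lambda>i. coeff (monom 1 i * g)) ` {..<k})"
    by (intro vec.span_sum vec.span_scale vec.span_base) auto
  finally show ?thesis .
qed

lemma code_dim_cyclic_code:
  fixes Z :: "'a::field set"
  assumes "finite Z" and roots: "\<forall>z\<in>Z. z ^ n = 1" and "0 < n"
  shows "code_dim (cyclic_code n Z) = n - card Z"
proof -
  define g where "g = gen_poly Z"
  define k where "k = n - card Z"
  define E where "E i = coeff (monom 1 i * g)" for i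
  have "g \<noteq> 0" and "degree g = card Z"
    using \<open>finite Z\<close> by (simp_all add: g_def gen_poly_nonzero degree_gen_poly)
  have "g dvd monom 1 n - 1"
    unfolding g_def using \<open>finite Z\<close> roots by (intro gen_poly_dvd) (auto simp: poly_monom)
  then have "card Z \<le> n"
    using \<open>degree g = card Z\<close> \<open>0 < n\<close> degree_monom_minus_one[of n]
    by (metis dvd_imp_degree_le degree_0 gr_implies_not0)
  have code: "cyclic_code n Z = {coeff p | p. degree p < n \<and> (\<forall>z\<in>Z. poly p z = 0)}"
    using assms by (rule cyclic_code_eq)
  show ?thesis
    unfolding code_dim_def
  proof (rule vec.dim_unique[where B = "E ` {..<k}"])
    show "E ` {..<k} \<subseteq> cyclic_code n Z"
      using \<open>g \<noteq> 0\<close> \<open>degree g = card Z\<close> \<open>finite Z\<close>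
      by (fastforce simp: code E_def k_def g_def degree_mult_eq degree_monom_eq gen_poly_root)
    show "vec.independent (E ` {..<k})"
      unfolding E_def using \<open>g \<noteq> 0\<close> by (rule independent_coeff_monom_mult)
    have "inj E"
      unfolding E_def using \<open>g \<noteq> 0\<close> by (rule inj_coeff_monom_mult)
    then show "card (E ` {..<k}) = n - card Z"
      by (simp add: card_image inj_on_subset k_def)
  next
    show "cyclic_code n Z \<subseteq> vec.span (E ` {..<k})"
    proof
      fix c assume "c \<in> cyclic_code n Z"
      then obtain p where "c = coeff p" and "degree p < n" and "\<forall>z\<in>Z. poly p z = 0"
        unfolding code by blast
      then obtain h where "p = h * g"
        using gen_poly_dvd[OF \<open>finite Z\<close>] by (metis dvdE g_def mult.commute)
      have "coeff h i = 0" if "k \<le> i" for i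
      proof (cases "h = 0")
        case False
        then have "degree h < k"
          using \<open>degree p < n\<close> \<open>g \<noteq> 0\<close> \<open>degree g = card Z\<close>
          by (simp add: \<open>p = h * g\<close> k_def degree_mult_eq)
        then show ?thesis
          using that by (simp add: coeff_eq_0)
      qed simp
      then show "c \<in> vec.span (E ` {..<k})"
        unfolding \<open>c = coeff p\<close> \<open>p = h * g\<close> E_def by (rule coeff_mult_in_span)
    qed
  qed
qed

lemma coeff_prod_even_quadratics_odd:
  "coeff (\<Prod>j\<in>J. [:f j, 0, 1:]) (2*k+1) = (0::'a::comm_ring_1)"
proof (induction J arbitrary: k rule: infinite_finite_induct)
  case (insert j J)
  have "coeff ([:f j, 0, 1:] * Q) (2*k+1) = f j * coeff Q (2*k+1) + (if k = 0 then 0 else coeff Q (2*(k-1)+1))"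
    for Q :: "'a poly"
    by (cases k) (simp_all add: coeff_pCons)
  then show ?case
    using insert by simp
qed simp_all

section \<open>The construction\<close>

locale lrc_construction =
  fixes \<alpha> :: "'a::field" and \<delta> n b t :: nat
  assumes two_le_\<delta>: "2 \<le> \<delta>" and n_eq: "n = 4 * \<delta> + 2"
    and prim_root_\<alpha>: "prim_root n \<alpha>" and coprime_b: "coprime b n"
begin

abbreviation m :: nat where "m \<equiv> 2 * \<delta> + 1"
abbreviation \<beta> :: 'a where "\<beta> \<equiv> \<alpha> ^ b"
abbreviation \<gamma> :: 'a where "\<gamma> \<equiv> \<beta> ^ 2"
abbreviation \<rho> :: 'a where "\<rho> \<equiv> (\<alpha> ^ t) ^ 2"

definition root :: "nat \<Rightarrow> 'a" where
  "root e = \<alpha> ^ t * \<beta> ^ e"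

definition defining_exps :: "nat set" where
  "defining_exps = {..<\<delta>} \<union> {\<delta>+1..<2*\<delta>} \<union> {2*\<delta>+1..<3*\<delta>}"

definition code :: "(nat \<Rightarrow> 'a) set" where
  "code = cyclic_code n (root ` defining_exps)"

lemma n_eq_double: "n = 2 * m"
  using n_eq by simp

lemma prim_root_\<beta>: "prim_root n \<beta>"
  using prim_root_\<alpha> coprime_b n_eq by (intro prim_root_power_coprime) simp_all

lemma \<beta>_power_m: "\<beta> ^ m = -1"
  using prim_root_\<beta> by (intro prim_root_half_power) (simp_all add: n_eq_double)

lemma prim_root_\<gamma>: "prim_root m \<gamma>"
  using prim_root_\<beta> by (intro prim_root_square) (simp add: n_eq_double)

lemma prim_root_\<gamma>_power_\<delta>: "prim_root m (\<gamma> ^ \<delta>)"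
  using prim_root_\<gamma> by (rule prim_root_power_coprime) (simp, metis coprime_commute coprime_double_succ)

lemma two_nonzero: "(2::'a) \<noteq> 0"
proof
  assume "(2::'a) = 0"
  then have "(-1::'a) = 1"
    by (simp add: eq_neg_iff_add_eq_0)
  then have "\<beta> ^ m = 1"
    using \<beta>_power_m by metis
  then have "n dvd m"
    using prim_root_power_eq_1_iff[OF prim_root_\<beta>, of m] n_eq by simp
  then show False
    using n_eq by (auto dest: dvd_imp_le)
qed

lemma \<alpha>_nonzero: "\<alpha> \<noteq> 0"
  using prim_root_nonzero[OF prim_root_\<alpha>] n_eq by simp

lemma \<rho>_nonzero: "\<rho> \<noteq> 0"
  using \<alpha>_nonzero by simp

lemma root_nonzero: "root e \<noteq> 0"
  using \<alpha>_nonzero by (simp add: root_def)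

lemma root_mult_power: "root a * \<beta> ^ j = root (a + j)"
  by (simp add: root_def power_add mult.assoc)

lemma root_add_m: "root (e + m) = - root e"
  by (simp only: root_mult_power[symmetric] \<beta>_power_m) simp

lemma root_square: "root e ^ 2 = \<rho> * \<gamma> ^ e"
proof -
  have "(\<beta> ^ e) ^ 2 = \<gamma> ^ e"
    by (simp only: power_mult[symmetric] mult_ac)
  then show ?thesis
    unfolding root_def power_mult_distrib by simp
qed

lemma root_power_n: "root e ^ n = 1"
proof -
  have "\<alpha> ^ n = 1" and "\<beta> ^ n = 1"
    using prim_root_\<alpha> prim_root_\<beta> by (simp_all add: prim_root_def)
  moreover have "(x ^ k) ^ n = (x ^ n) ^ k" for x :: 'a and k
    by (simp only: power_mult[symmetric] mult.commute)
  ultimately show ?thesis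
    unfolding root_def power_mult_distrib by simp
qed

lemma inj_on_root: "inj_on root defining_exps"
proof
  fix e e' assume "e \<in> defining_exps" and "e' \<in> defining_exps" and "root e = root e'"
  then have "\<beta> ^ e = \<beta> ^ e'"
    using \<alpha>_nonzero by (simp add: root_def)
  moreover have "e < n" and "e' < n"
    using \<open>e \<in> defining_exps\<close> \<open>e' \<in> defining_exps\<close> n_eq by (auto simp: defining_exps_def)
  ultimately show "e = e'"
    using prim_root_inj_on_powers[OF prim_root_\<beta>] by (auto dest: inj_onD)
qed

lemma finite_defining_exps [simp]: "finite defining_exps"
  by (simp add: defining_exps_def)

lemma card_defining_exps: "card defining_exps = 3 * \<delta> - 2"
proof -
  have "card defining_exps = card ({..<\<delta>} \<union> {\<delta>+1..<2*\<delta>}) + card {2*\<delta>+1..<3*\<delta>}"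
    unfolding defining_exps_def by (rule card_Un_disjoint) auto
  also have "card ({..<\<delta>} \<union> {\<delta>+1..<2*\<delta>}) = card {..<\<delta>} + card {\<delta>+1..<2*\<delta>}"
    by (rule card_Un_disjoint) auto
  finally show ?thesis
    using two_le_\<delta> by simp
qed

lemma defining_exps_eq_sums: "defining_exps = {a + j | a j. a \<in> {0, 1, \<delta>+1, 2*\<delta>+1} \<and> j \<le> \<delta> - 2}"
proof (intro set_eqI iffI)
  fix e assume "e \<in> defining_exps"
  then consider "e \<le> \<delta> - 2" | "e = 1 + (\<delta> - 2)" | "\<delta> + 1 \<le> e \<and> e < 2*\<delta>" | "2*\<delta> + 1 \<le> e \<and> e < 3*\<delta>"
    using two_le_\<delta> unfolding defining_exps_def by fastforce
  then show "e \<in> {a + j | a j. a \<in> {0, 1, \<delta>+1, 2*\<delta>+1} \<and> j \<le> \<delta> - 2}"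
  proof cases
    case 1
    then show ?thesis by force
  next
    case 2
    then show ?thesis by blast
  next
    case 3
    then have "e = (\<delta> + 1) + (e - (\<delta> + 1))" and "e - (\<delta> + 1) \<le> \<delta> - 2" by auto
    then show ?thesis by blast
  next
    case 4
    then have "e = (2*\<delta> + 1) + (e - (2*\<delta> + 1))" and "e - (2*\<delta> + 1) \<le> \<delta> - 2" by auto
    then show ?thesis by blast
  qed
qed (use two_le_\<delta> in \<open>auto simp: defining_exps_def\<close>)

lemma set_mult_root_powers:
  "set_mult (root ` I) ((\<lambda>j. \<beta> ^ j) ` J) = root ` {a + j | a j. a \<in> I \<and> j \<in> J}"
proof (intro set_eqI iffI)
  fix x assume "x \<in> set_mult (root ` I) ((\<lambda>j. \<beta> ^ j) ` J)"
  then obtain a j where "a \<in> I" "j \<in> J" and "x = root (a + j)"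
    unfolding set_mult_def by (auto simp: root_mult_power)
  then show "x \<in> root ` {a + j | a j. a \<in> I \<and> j \<in> J}"
    by blast
next
  fix x assume "x \<in> root ` {a + j | a j. a \<in> I \<and> j \<in> J}"
  then obtain a j where "a \<in> I" "j \<in> J" and "x = root a * \<beta> ^ j"
    by (auto simp: root_mult_power)
  then show "x \<in> set_mult (root ` I) ((\<lambda>j. \<beta> ^ j) ` J)"
    unfolding set_mult_def by blast
qed

lemma defining_set_eq:
  "set_mult {\<alpha> ^ t, \<alpha> ^ (t + b), \<alpha> ^ (t + (\<delta> + 1) * b), \<alpha> ^ (t + (2 * \<delta> + 1) * b)}
            {\<alpha> ^ (j * b) | j. j \<le> \<delta> - 2} = root ` defining_exps"
proof -
  have power_b: "\<alpha> ^ (j * b) = \<beta> ^ j" for j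
    by (metis power_mult mult.commute)
  have A: "{\<alpha> ^ t, \<alpha> ^ (t + b), \<alpha> ^ (t + (\<delta> + 1) * b), \<alpha> ^ (t + (2 * \<delta> + 1) * b)}
      = root ` {0, 1, \<delta>+1, 2*\<delta>+1}"
    by (simp add: root_def power_add power_b)
  have B: "{\<alpha> ^ (j * b) | j. j \<le> \<delta> - 2} = (\<lambda>j. \<beta> ^ j) ` {j. j \<le> \<delta> - 2}"
    by (auto simp: power_b)
  show ?thesis
    unfolding A B set_mult_root_powers defining_exps_eq_sums by simp
qed

lemma code_eq: "code = {coeff p | p. degree p < n \<and> (\<forall>e\<in>defining_exps. poly p (root e) = 0)}"
  unfolding code_def using root_power_n n_eq
  by (subst cyclic_code_eq) auto

lemma code_dim_code: "code_dim code = \<delta> + 4"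
  unfolding code_def using root_power_n n_eq two_le_\<delta>
  by (subst code_dim_cyclic_code) (auto simp: card_image[OF inj_on_root] card_defining_exps)

lemma codeword_even_odd:
  assumes "c \<in> code" and "e \<in> defining_exps"
  shows "poly_vec m (even_part c) (\<rho> * \<gamma> ^ e) + root e * poly_vec m (odd_part c) (\<rho> * \<gamma> ^ e) = 0"
proof -
  obtain p where "c = coeff p" and "degree p < n" and "poly p (root e) = 0"
    using assms by (auto simp: code_eq)
  then have "poly_vec (2*m) c (root e) = 0"
    using poly_eq_poly_vec[of p n] n_eq_double by simp
  then show ?thesis
    unfolding poly_vec_even_odd root_square .
qed

lemma codeword_parts_vanish:
  assumes "c \<in> code" and "j \<le> \<delta> - 2"
  shows "poly_vec m (even_part c) (\<rho> * \<gamma> ^ j) = 0" and "poly_vec m (odd_part c) (\<rho> * \<gamma> ^ j) = 0"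
proof -
  define ev where "ev = poly_vec m (even_part c) (\<rho> * \<gamma> ^ j)"
  define od where "od = poly_vec m (odd_part c) (\<rho> * \<gamma> ^ j)"
  have "j \<in> defining_exps" and "j + m \<in> defining_exps"
    using assms(2) two_le_\<delta> by (auto simp: defining_exps_def)
  have "\<gamma> ^ (j + m) = \<gamma> ^ j"
    using prim_root_\<gamma> by (simp only: power_add prim_root_def) simp
  have "ev + root j * od = 0"
    using codeword_even_odd[OF assms(1) \<open>j \<in> defining_exps\<close>] unfolding ev_def od_def .
  moreover have "ev + (- root j) * od = 0"
    using codeword_even_odd[OF assms(1) \<open>j + m \<in> defining_exps\<close>]
    unfolding ev_def od_def \<open>\<gamma> ^ (j + m) = \<gamma> ^ j\<close> root_add_m .
  moreover have "2 * root j * od = (ev + root j * od) - (ev + (- root j) * od)"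
    by (simp add: algebra_simps)
  ultimately have "2 * root j * od = 0 - 0"
    by (simp only:)
  then show "od = 0" and "ev = 0"
    using \<open>ev + root j * od = 0\<close> two_nonzero root_nonzero by simp_all
qed

lemma part_weight_ge_\<delta>:
  assumes "\<exists>i<m. v i \<noteq> 0" and zeros: "\<And>j. j \<le> \<delta> - 2 \<Longrightarrow> poly_vec m v (\<rho> * \<gamma> ^ j) = 0"
  shows "\<delta> \<le> hamming_wt m v"
proof -
  have "\<delta> - 1 < hamming_wt m v"
    using prim_root_\<gamma> \<rho>_nonzero assms(1)
  proof (rule bch_bound[where s = 0])
    fix k assume "k < \<delta> - 1"
    then show "poly_vec m v (\<rho> * \<gamma> ^ (0 + k)) = 0"
      using zeros[of k] by simp
  qed
  then show ?thesis
    by simp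
qed

text \<open>
  As \<open>\<delta> \<cdot> (-2) \<equiv> 1 (mod m)\<close>, multiplication by \<open>\<delta>\<close> maps the run \<open>3, \<dots>, 2\<delta> + 1\<close> of exponents
  onto the residues other than \<open>\<delta>\<close> and \<open>2\<delta>\<close>; this is why the BCH bound is applied to \<open>\<gamma>\<^sup>\<delta>\<close>.
\<close>

lemma part_weight_ge_2\<delta>:
  assumes "\<exists>i<m. v i \<noteq> 0"
    and zeros: "\<And>j. j < m \<Longrightarrow> j \<noteq> \<delta> \<Longrightarrow> j \<noteq> 2*\<delta> \<Longrightarrow> poly_vec m v (\<rho> * \<gamma> ^ j) = 0"
  shows "2*\<delta> \<le> hamming_wt m v"
proof -
  have "2*\<delta> - 1 < hamming_wt m v"
    using prim_root_\<gamma>_power_\<delta> \<rho>_nonzero assms(1)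
  proof (rule bch_bound[where s = 3])
    fix k assume "k < 2*\<delta> - 1"
    define j where "j = \<delta> * (k + 3) mod m"
    have "\<gamma> ^ m = 1"
      using prim_root_\<gamma> unfolding prim_root_def by (rule conjunct1)
    have "(\<gamma> ^ \<delta>) ^ (3 + k) = \<gamma> ^ (\<delta> * (k + 3))"
      unfolding add.commute[of 3 k] by (rule power_mult[symmetric])
    also have "\<dots> = \<gamma> ^ j"
      unfolding j_def by (rule power_mod_order[OF \<open>\<gamma> ^ m = 1\<close>])
    finally have "(\<gamma> ^ \<delta>) ^ (3 + k) = \<gamma> ^ j" .
    moreover have "j < m" and "j \<noteq> \<delta>" and "j \<noteq> 2*\<delta>"
      using mod_double_succ_avoids[of k \<delta>] \<open>k < 2*\<delta> - 1\<close> by (simp_all add: j_def)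
    then have "poly_vec m v (\<rho> * \<gamma> ^ j) = 0"
      by (rule zeros)
    ultimately show "poly_vec m v (\<rho> * (\<gamma> ^ \<delta>) ^ (3 + k)) = 0"
      by simp
  qed
  then show ?thesis
    by simp
qed

lemma codeword_part_vanishes_if_other_zero:
  assumes "c \<in> code" and "j < m" and "j \<noteq> \<delta>" and "j \<noteq> 2*\<delta>"
  shows "(\<forall>i<m. odd_part c i = 0) \<Longrightarrow> poly_vec m (even_part c) (\<rho> * \<gamma> ^ j) = 0"
    and "(\<forall>i<m. even_part c i = 0) \<Longrightarrow> poly_vec m (odd_part c) (\<rho> * \<gamma> ^ j) = 0"
proof -
  have "j \<in> defining_exps"
    using assms(2-4) by (auto simp: defining_exps_def)
  note even_odd = codeword_even_odd[OF assms(1) this]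
  show "poly_vec m (even_part c) (\<rho> * \<gamma> ^ j) = 0" if "\<forall>i<m. odd_part c i = 0"
    using even_odd that by (simp add: poly_vec_def)
  show "poly_vec m (odd_part c) (\<rho> * \<gamma> ^ j) = 0" if "\<forall>i<m. even_part c i = 0"
    using even_odd that root_nonzero by (simp add: poly_vec_def)
qed

lemma codeword_weight_ge:
  assumes "c \<in> code" and "\<exists>i<n. c i \<noteq> 0"
  shows "2*\<delta> \<le> hamming_wt n c"
proof -
  have wt: "hamming_wt n c = hamming_wt m (even_part c) + hamming_wt m (odd_part c)"
    unfolding n_eq_double by (rule hamming_wt_even_odd)
  obtain i where "i < 2*m" and "c i \<noteq> 0"
    using assms(2) n_eq_double by auto
  then have "\<not> ((\<forall>i<m. even_part c i = 0) \<and> (\<forall>i<m. odd_part c i = 0))"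
    by (cases "even i") (auto simp: even_part_def odd_part_def elim!: evenE oddE)
  then consider
      (both) "\<exists>i<m. even_part c i \<noteq> 0" and "\<exists>i<m. odd_part c i \<noteq> 0"
    | (even) "\<exists>i<m. even_part c i \<noteq> 0" and "\<forall>i<m. odd_part c i = 0"
    | (odd) "\<forall>i<m. even_part c i = 0" and "\<exists>i<m. odd_part c i \<noteq> 0"
    by blast
  then show ?thesis
  proof cases
    case both
    have "\<delta> \<le> hamming_wt m (even_part c)"
      using both(1) codeword_parts_vanish(1)[OF assms(1)] by (rule part_weight_ge_\<delta>)
    moreover have "\<delta> \<le> hamming_wt m (odd_part c)"
      using both(2) codeword_parts_vanish(2)[OF assms(1)] by (rule part_weight_ge_\<delta>)
    ultimately show ?thesis
      unfolding wt by simp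
  next
    case even
    have "2*\<delta> \<le> hamming_wt m (even_part c)"
      using even(1) codeword_part_vanishes_if_other_zero(1)[OF assms(1) _ _ _ even(2)]
      by (rule part_weight_ge_2\<delta>)
    then show ?thesis
      unfolding wt by simp
  next
    case odd
    have "2*\<delta> \<le> hamming_wt m (odd_part c)"
      using odd(2) codeword_part_vanishes_if_other_zero(2)[OF assms(1) _ _ _ odd(1)]
      by (rule part_weight_ge_2\<delta>)
    then show ?thesis
      unfolding wt by simp
  qed
qed

lemma has_locality_code:
  assumes "i < n"
  shows "has_locality n code (\<delta> + 2) \<delta> i"
proof -
  define S where "S = {x. x < 2*m \<and> (even x \<longleftrightarrow> even i)}"
  define part where "part = (if even i then even_part else odd_part :: (nat \<Rightarrow> 'a) \<Rightarrow> nat \<Rightarrow> 'a)"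
  have support: "card {x \<in> S. c x \<noteq> 0} = hamming_wt m (part c)" for c :: "nat \<Rightarrow> 'a"
    unfolding S_def part_def using card_parity_class_support[of m i c] by simp
  have "card S = m"
    using support[of "\<lambda>_. 1"] by (simp add: part_def hamming_wt_def even_part_def odd_part_def)
  have "punct_dist_ge code S \<delta>"
    unfolding punct_dist_ge_def
  proof (intro ballI impI)
    fix c assume "c \<in> code" and "\<exists>x\<in>S. c x \<noteq> 0"
    then have "card {x \<in> S. c x \<noteq> 0} \<noteq> 0"
      by (auto simp: S_def)
    then have "\<exists>k<m. part c k \<noteq> 0"
      unfolding support hamming_wt_eq_0_iff by simp
    moreover have "poly_vec m (part c) (\<rho> * \<gamma> ^ j) = 0" if "j \<le> \<delta> - 2" for j
      using codeword_parts_vanish[OF \<open>c \<in> code\<close> that] by (simp add: part_def)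
    ultimately show "\<delta> \<le> card {x \<in> S. c x \<noteq> 0}"
      unfolding support by (rule part_weight_ge_\<delta>)
  qed
  moreover have "S \<subseteq> {0..<n}" and "i \<in> S" and "card S \<le> \<delta> + 2 + \<delta> - 1"
    using assms \<open>card S = m\<close> by (auto simp: S_def n_eq_double)
  ultimately show ?thesis
    unfolding has_locality_def by blast
qed

text \<open>An even polynomial, so only its \<open>2\<delta>\<close> even coefficients up to its degree \<open>4\<delta> - 2\<close> can be nonzero.\<close>

definition low_weight_poly :: "'a poly" where
  "low_weight_poly = (\<Prod>j\<in>{..<\<delta>} \<union> {\<delta>+1..<2*\<delta>}. [:- (root j ^ 2), 0, 1:])"

lemma low_weight_poly_nonzero: "low_weight_poly \<noteq> 0"
  by (simp add: low_weight_poly_def)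

lemma degree_low_weight_poly: "degree low_weight_poly = 4*\<delta> - 2"
proof -
  have "card ({..<\<delta>} \<union> {\<delta>+1..<2*\<delta>}) = 2*\<delta> - 1"
    using two_le_\<delta> by (subst card_Un_disjoint) auto
  then show ?thesis
    unfolding low_weight_poly_def by (subst degree_prod_eq_sum_degree) auto
qed

lemma low_weight_poly_root:
  assumes "e \<in> defining_exps"
  shows "poly low_weight_poly (root e) = 0"
proof -
  obtain j where "j \<in> {..<\<delta>} \<union> {\<delta>+1..<2*\<delta>}" and "root e ^ 2 = root j ^ 2"
  proof (cases "e < 2*\<delta>")
    case True
    then show ?thesis
      using assms that by (auto simp: defining_exps_def)
  next
    case False
    then have "e = (e - m) + m" and "e - m \<in> {..<\<delta>}"
      using assms by (auto simp: defining_exps_def)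
    then have "root e ^ 2 = root (e - m) ^ 2"
      by (metis root_add_m power2_minus)
    then show ?thesis
      using that \<open>e - m \<in> {..<\<delta>}\<close> by blast
  qed
  then have "poly [:- (root j ^ 2), 0, 1:] (root e) = 0"
    by (simp add: power2_eq_square)
  then show ?thesis
    using \<open>j \<in> {..<\<delta>} \<union> {\<delta>+1..<2*\<delta>}\<close> unfolding low_weight_poly_def poly_prod
    by (intro prod_zero) auto
qed

lemma low_weight_codeword: "coeff low_weight_poly \<in> code"
  using degree_low_weight_poly low_weight_poly_root n_eq unfolding code_eq by auto

lemma hamming_wt_low_weight_codeword: "hamming_wt n (coeff low_weight_poly) \<le> 2*\<delta>"
proof -
  have "hamming_wt m (odd_part (coeff low_weight_poly)) = 0"
    unfolding hamming_wt_eq_0_iff odd_part_def low_weight_poly_def coeff_prod_even_quadratics_odd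
    by simp
  moreover have "hamming_wt m (even_part (coeff low_weight_poly)) \<le> 2*\<delta>"
  proof (rule hamming_wt_le_if_zero_from)
    fix k assume "2*\<delta> \<le> k"
    then have "degree low_weight_poly < 2*k"
      using degree_low_weight_poly two_le_\<delta> by simp
    then show "even_part (coeff low_weight_poly) k = 0"
      by (simp add: even_part_def coeff_eq_0)
  qed
  ultimately show ?thesis
    unfolding n_eq_double hamming_wt_even_odd by simp
qed

lemma min_dist_code: "min_dist n code = 2*\<delta>"
proof (rule min_dist_eqI[OF codeword_weight_ge low_weight_codeword])
  have "degree low_weight_poly < n"
    using degree_low_weight_poly n_eq by simp
  then show "\<exists>i<n. coeff low_weight_poly i \<noteq> 0"
    using low_weight_poly_nonzero by (intro exI[of _ "degree low_weight_poly"]) simp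
  then show "hamming_wt n (coeff low_weight_poly) = 2*\<delta>"
    using hamming_wt_low_weight_codeword codeword_weight_ge[OF low_weight_codeword] by simp
qed

lemma optimal_LRC_code: "optimal_LRC n code (\<delta> + 2) \<delta>"
proof -
  have "\<lceil>real (\<delta> + 4) / real (\<delta> + 2)\<rceil> = 2"
    using two_le_\<delta> by (intro ceiling_unique) (simp_all add: field_simps)
  then show ?thesis
    using has_locality_code two_le_\<delta> n_eq
    unfolding optimal_LRC_def is_LRC_def code_dim_code min_dist_code by simp
qed

end

theorem proposition4p9:
  fixes \<alpha> :: "'a::{finite, field}" and \<delta> n b t :: nat
  assumes "2 \<le> \<delta>"
    and "n = 4 * \<delta> + 2"
    and "n dvd (card (UNIV :: 'a set) - 1)"
    and "prim_root n \<alpha>"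
    and "0 < b" and "coprime b n"
    and "t < n"
  shows "let A = {\<alpha> ^ t, \<alpha> ^ (t + b), \<alpha> ^ (t + (\<delta> + 1) * b), \<alpha> ^ (t + (2 * \<delta> + 1) * b)};
             B = {\<alpha> ^ (j * b) | j. j \<le> \<delta> - 2};
             C = cyclic_code n (set_mult A B)
         in optimal_LRC n C (\<delta> + 2) \<delta> \<and> code_dim C = \<delta> + 4 \<and> min_dist n C = 2 * \<delta>"
proof -
  interpret lrc_construction \<alpha> \<delta> n b t
    using assms(1,2,4,6) by unfold_locales
  show ?thesis
    unfolding Let_def defining_set_eq code_def[symmetric]
    using optimal_LRC_code code_dim_code min_dist_code by simp
qed

end
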